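(* The function $g:2^V\to\mathbb{R}$, $g(A)=h(A)+\frac1L f(A)$, is non-decreasing and submodular.
   Context: $G=(V,E,w)$ is a finite simple undirected graph with positive rational edge weights and no isolated vertices. $N_A(v)=N(v)\cap A$, $W_A(v)=\sum_{u\in N_A(v)}w_{(v,u)}$, $W(v)=W_V(v)$. $h(A)=\sum_{v\in V}h_A(v)$ with $h_A(v)=W(v)/2$ if $v\in A$ or $W_A(v)\ge W(v)/2$, and $h_A(v)=W_A(v)$ otherwise. $f(A)=\sum_{v\in V}\delta_A(v)$ with $\delta_A(v)=1$ if $|N_A(v)|>0$ and $0$ otherwise. For $v$ with incident edge weights $w_1,\dots,w_d$, write $w_0=W(v)/2$ and each $w_i$ as a reduced fraction $p_i/q_i$; $l(v)=\mathrm{lcm}\{q_0,\dots,q_d\}$, $L=\max_v l(v)$. *)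

theory Defs
  imports Complex_Main
begin

definition wgraph :: "'a set \<Rightarrow> ('a \<Rightarrow> 'a \<Rightarrow> bool) \<Rightarrow> ('a \<Rightarrow> 'a \<Rightarrow> rat) \<Rightarrow> bool" where
  "wgraph V E w \<longleftrightarrow> finite V
     \<and> (\<forall>u v. E u v \<longrightarrow> u \<in> V \<and> v \<in> V)
     \<and> (\<forall>v. \<not> E v v)
     \<and> (\<forall>u v. E u v \<longrightarrow> E v u)
     \<and> (\<forall>u v. E u v \<longrightarrow> w u v = w v u)
     \<and> (\<forall>u v. E u v \<longrightarrow> w u v > 0)"

definition no_isolated :: "'a set \<Rightarrow> ('a \<Rightarrow> 'a \<Rightarrow> bool) \<Rightarrow> bool" where
  "no_isolated V E \<longleftrightarrow> (\<forall>v\<in>V. \<exists>u. E v u)"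

definition nbA :: "('a \<Rightarrow> 'a \<Rightarrow> bool) \<Rightarrow> 'a set \<Rightarrow> 'a \<Rightarrow> 'a set" where
  "nbA E A v = {u \<in> A. E v u}"

definition WA :: "('a \<Rightarrow> 'a \<Rightarrow> bool) \<Rightarrow> ('a \<Rightarrow> 'a \<Rightarrow> rat) \<Rightarrow> 'a set \<Rightarrow> 'a \<Rightarrow> rat" where
  "WA E w A v = (\<Sum>u\<in>nbA E A v. w v u)"

definition hA :: "'a set \<Rightarrow> ('a \<Rightarrow> 'a \<Rightarrow> bool) \<Rightarrow> ('a \<Rightarrow> 'a \<Rightarrow> rat) \<Rightarrow> 'a set \<Rightarrow> 'a \<Rightarrow> rat" where
  "hA V E w A v = (if v \<in> A \<or> WA E w A v \<ge> WA E w V v / 2 then WA E w V v / 2 else WA E w A v)"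

definition hfun :: "'a set \<Rightarrow> ('a \<Rightarrow> 'a \<Rightarrow> bool) \<Rightarrow> ('a \<Rightarrow> 'a \<Rightarrow> rat) \<Rightarrow> 'a set \<Rightarrow> rat" where
  "hfun V E w A = (\<Sum>v\<in>V. hA V E w A v)"

definition ffun :: "'a set \<Rightarrow> ('a \<Rightarrow> 'a \<Rightarrow> bool) \<Rightarrow> 'a set \<Rightarrow> nat" where
  "ffun V E A = (\<Sum>v\<in>V. if card (nbA E A v) > 0 then 1 else 0)"

definition denom :: "rat \<Rightarrow> int" where
  "denom r = snd (quotient_of r)"

definition lv :: "'a set \<Rightarrow> ('a \<Rightarrow> 'a \<Rightarrow> bool) \<Rightarrow> ('a \<Rightarrow> 'a \<Rightarrow> rat) \<Rightarrow> 'a \<Rightarrow> int" where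
  "lv V E w v = Lcm (denom ` ({WA E w V v / 2} \<union> {w v u | u. E v u}))"

definition Lmax :: "'a set \<Rightarrow> ('a \<Rightarrow> 'a \<Rightarrow> bool) \<Rightarrow> ('a \<Rightarrow> 'a \<Rightarrow> rat) \<Rightarrow> int" where
  "Lmax V E w = Max (lv V E w ` V)"

definition gfun :: "'a set \<Rightarrow> ('a \<Rightarrow> 'a \<Rightarrow> bool) \<Rightarrow> ('a \<Rightarrow> 'a \<Rightarrow> rat) \<Rightarrow> 'a set \<Rightarrow> real" where
  "gfun V E w A = real_of_rat (hfun V E w A) + real (ffun V E A) / real_of_int (Lmax V E w)"

end

theory Submission
  imports Defs
begin

text \<open>Both summands of g are sums over the vertices of per-vertex set functions. For each v,
  \<open>h_A(v) = min (W_A(v) + [v \<in> A] W(v)/2, W(v)/2)\<close> truncates a monotone modular function at a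
  constant, and \<open>\<delta>_A(v)\<close> indicates whether A meets the neighbourhood of v; both are monotone
  and submodular. These properties survive sums, the embedding of the rationals into the reals
  and division by the non-negative constant L. Neither the absence of isolated vertices nor the
  particular value of L is needed.\<close>

definition monotone_set_fun :: "'a set \<Rightarrow> ('a set \<Rightarrow> 'b::order) \<Rightarrow> bool" where
  "monotone_set_fun V g \<longleftrightarrow> (\<forall>A B. A \<subseteq> B \<and> B \<subseteq> V \<longrightarrow> g A \<le> g B)"

definition submodular_set_fun :: "'a set \<Rightarrow> ('a set \<Rightarrow> 'b::{plus,order}) \<Rightarrow> bool" where
  "submodular_set_fun V g \<longleftrightarrow>
     (\<forall>A B. A \<subseteq> V \<and> B \<subseteq> V \<longrightarrow> g (A \<union> B) + g (A \<inter> B) \<le> g A + g B)"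

lemma monotone_set_fun_sum:
  fixes g :: "'i \<Rightarrow> 'a set \<Rightarrow> 'b::ordered_comm_monoid_add"
  assumes "\<And>i. i \<in> I \<Longrightarrow> monotone_set_fun V (g i)"
  shows "monotone_set_fun V (\<lambda>A. \<Sum>i\<in>I. g i A)"
  using assms unfolding monotone_set_fun_def by (simp add: sum_mono)

lemma submodular_set_fun_sum:
  fixes g :: "'i \<Rightarrow> 'a set \<Rightarrow> 'b::ordered_comm_monoid_add"
  assumes "\<And>i. i \<in> I \<Longrightarrow> submodular_set_fun V (g i)"
  shows "submodular_set_fun V (\<lambda>A. \<Sum>i\<in>I. g i A)"
  using assms unfolding submodular_set_fun_def sum.distrib[symmetric] by (simp add: sum_mono)

lemma monotone_set_fun_add:
  fixes f g :: "'a set \<Rightarrow> 'b::ordered_ab_semigroup_add"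
  assumes "monotone_set_fun V f" "monotone_set_fun V g"
  shows "monotone_set_fun V (\<lambda>A. f A + g A)"
  using assms unfolding monotone_set_fun_def by (simp add: add_mono)

lemma submodular_set_fun_add:
  fixes f g :: "'a set \<Rightarrow> 'b::ordered_ab_semigroup_add"
  assumes "submodular_set_fun V f" "submodular_set_fun V g"
  shows "submodular_set_fun V (\<lambda>A. f A + g A)"
  unfolding submodular_set_fun_def
proof (intro allI impI)
  fix A B assume "A \<subseteq> V \<and> B \<subseteq> V"
  then have "f (A \<union> B) + f (A \<inter> B) + (g (A \<union> B) + g (A \<inter> B)) \<le> f A + f B + (g A + g B)"
    using assms unfolding submodular_set_fun_def by (simp add: add_mono)
  then show "f (A \<union> B) + g (A \<union> B) + (f (A \<inter> B) + g (A \<inter> B)) \<le> f A + g A + (f B + g B)"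
    by (simp add: ac_simps)
qed

lemma monotone_set_fun_comp:
  assumes "mono \<phi>" "monotone_set_fun V g"
  shows "monotone_set_fun V (\<lambda>A. \<phi> (g A))"
  using assms unfolding monotone_set_fun_def by (simp add: monoD)

lemma submodular_set_fun_comp:
  assumes "mono \<phi>" "\<And>x y. \<phi> (x + y) = \<phi> x + \<phi> y" "submodular_set_fun V g"
  shows "submodular_set_fun V (\<lambda>A. \<phi> (g A))"
  using assms unfolding submodular_set_fun_def by (simp add: monoD flip: assms(2))

lemma min_const_submodular_ineq:
  fixes a b c p q :: "'b::linordered_ab_group_add"
  assumes "p + q = a + b" "q \<le> a" "q \<le> b" "a \<le> p" "b \<le> p"
  shows "min p c + min q c \<le> min a c + min b c"
proof (cases "c \<le> q")
  case True
  with assms(2-5) have "min p c = c" "min q c = c" "min a c = c" "min b c = c"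
    by (simp_all add: min_absorb2 order_trans[OF True])
  then show ?thesis by simp
next
  case False
  then have "min q c = q" by simp
  have "min p c + q \<le> min a c + min b c"
  proof (cases "a \<le> c"; cases "b \<le> c")
    assume "a \<le> c" "b \<le> c"
    then show ?thesis using assms(1) add_right_mono[OF min.cobounded1[of p c], of q] by simp
  next
    assume "a \<le> c" "\<not> b \<le> c"
    then show ?thesis using add_mono[OF assms(2) min.cobounded2[of p c]] by (simp add: add.commute)
  next
    assume "\<not> a \<le> c" "b \<le> c"
    then show ?thesis using add_mono[OF min.cobounded2[of p c] assms(3)] by simp
  next
    assume "\<not> a \<le> c" "\<not> b \<le> c"
    then show ?thesis using add_mono[OF min.cobounded2[of p c], of q c] False by simp
  qed
  with \<open>min q c = q\<close> show ?thesis by simp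
qed

lemma submodular_set_fun_min_const:
  fixes m :: "'a set \<Rightarrow> 'b::linordered_ab_group_add"
  assumes "monotone_set_fun V m"
    and modular: "\<And>A B. m (A \<union> B) + m (A \<inter> B) = m A + m B"
  shows "submodular_set_fun V (\<lambda>A. min (m A) c)"
  unfolding submodular_set_fun_def
proof (intro allI impI)
  fix A B assume "A \<subseteq> V \<and> B \<subseteq> V"
  then have "m (A \<inter> B) \<le> m A" "m (A \<inter> B) \<le> m B" "m A \<le> m (A \<union> B)" "m B \<le> m (A \<union> B)"
    using assms(1) unfolding monotone_set_fun_def by auto
  with modular[of A B] show "min (m (A \<union> B)) c + min (m (A \<inter> B)) c \<le> min (m A) c + min (m B) c"
    by (intro min_const_submodular_ineq)
qed

lemma monotone_set_fun_min_const:
  fixes m :: "'a set \<Rightarrow> 'b::linorder"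
  assumes "monotone_set_fun V m"
  shows "monotone_set_fun V (\<lambda>A. min (m A) c)"
  using assms unfolding monotone_set_fun_def by (simp add: min.coboundedI1)

lemma monotone_set_fun_meets:
  "monotone_set_fun V (\<lambda>A. of_bool (A \<inter> N \<noteq> {}) :: 'b::linordered_semidom)"
  unfolding monotone_set_fun_def by auto

lemma submodular_set_fun_meets:
  "submodular_set_fun V (\<lambda>A. of_bool (A \<inter> N \<noteq> {}) :: 'b::linordered_semidom)"
  unfolding submodular_set_fun_def by auto

lemma nbA_eq_Int: "nbA E A v = A \<inter> {u. E v u}"
  by (auto simp: nbA_def)

lemma finite_nbA: "wgraph V E w \<Longrightarrow> finite (nbA E A v)"
  by (rule finite_subset[of _ V]) (auto simp: wgraph_def nbA_def)

lemma WA_nonneg: "wgraph V E w \<Longrightarrow> 0 \<le> WA E w A v"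
  unfolding WA_def by (rule sum_nonneg) (auto simp: nbA_def wgraph_def less_imp_le)

lemma WA_mono:
  assumes "wgraph V E w" "A \<subseteq> B"
  shows "WA E w A v \<le> WA E w B v"
  unfolding WA_def
proof (rule sum_mono2)
  show "finite (nbA E B v)" using finite_nbA[OF assms(1)] .
  show "nbA E A v \<subseteq> nbA E B v" using assms(2) by (auto simp: nbA_def)
  show "\<And>u. u \<in> nbA E B v - nbA E A v \<Longrightarrow> 0 \<le> w v u"
    using assms(1) by (auto simp: nbA_def wgraph_def less_imp_le)
qed

lemma WA_union_inter:
  assumes "wgraph V E w"
  shows "WA E w (A \<union> B) v + WA E w (A \<inter> B) v = WA E w A v + WA E w B v"
proof -
  have "nbA E (A \<union> B) v = nbA E A v \<union> nbA E B v" "nbA E (A \<inter> B) v = nbA E A v \<inter> nbA E B v"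
    by (auto simp: nbA_def)
  then show ?thesis
    unfolding WA_def by (simp add: sum.union_inter finite_nbA[OF assms])
qed

lemma hA_eq_min:
  assumes "wgraph V E w"
  shows "hA V E w A v = min (WA E w A v + (if v \<in> A then WA E w V v / 2 else 0)) (WA E w V v / 2)"
  using WA_nonneg[OF assms, of A v] WA_nonneg[OF assms, of V v]
  by (auto simp: hA_def min_def)

lemma monotone_submodular_hA:
  assumes "wgraph V E w"
  shows "monotone_set_fun V (\<lambda>A. hA V E w A v) \<and> submodular_set_fun V (\<lambda>A. hA V E w A v)"
proof -
  define m where "m A = WA E w A v + (if v \<in> A then WA E w V v / 2 else 0)" for A
  have mono_m: "monotone_set_fun V m"
    unfolding monotone_set_fun_def
  proof (intro allI impI)
    fix A B assume "A \<subseteq> B \<and> B \<subseteq> V"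
    moreover have "0 \<le> WA E w V v" by (rule WA_nonneg[OF assms])
    ultimately have "WA E w A v \<le> WA E w B v"
      and "(if v \<in> A then WA E w V v / 2 else 0) \<le> (if v \<in> B then WA E w V v / 2 else 0)"
      using WA_mono[OF assms] by auto
    then show "m A \<le> m B" unfolding m_def by (rule add_mono)
  qed
  have "m (A \<union> B) + m (A \<inter> B) = m A + m B" for A B
    using WA_union_inter[OF assms, of A B v] unfolding m_def by auto
  with mono_m have "submodular_set_fun V (\<lambda>A. min (m A) (WA E w V v / 2))"
    by (rule submodular_set_fun_min_const)
  moreover have "monotone_set_fun V (\<lambda>A. min (m A) (WA E w V v / 2))"
    using mono_m by (rule monotone_set_fun_min_const)
  ultimately show ?thesis
    unfolding hA_eq_min[OF assms] m_def by simp
qed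

lemma delta_eq_meets:
  assumes "wgraph V E w"
  shows "(if card (nbA E A v) > 0 then 1 else 0) = of_bool (A \<inter> {u. E v u} \<noteq> {})"
  using finite_nbA[OF assms, of A v] by (simp add: card_gt_0_iff nbA_eq_Int)

lemma monotone_submodular_hfun:
  assumes "wgraph V E w"
  shows "monotone_set_fun V (hfun V E w) \<and> submodular_set_fun V (hfun V E w)"
  unfolding hfun_def[abs_def]
proof
  show "monotone_set_fun V (\<lambda>A. \<Sum>v\<in>V. hA V E w A v)"
    by (rule monotone_set_fun_sum) (use monotone_submodular_hA[OF assms] in blast)
  show "submodular_set_fun V (\<lambda>A. \<Sum>v\<in>V. hA V E w A v)"
    by (rule submodular_set_fun_sum) (use monotone_submodular_hA[OF assms] in blast)
qed

lemma monotone_submodular_ffun: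
  assumes "wgraph V E w"
  shows "monotone_set_fun V (ffun V E) \<and> submodular_set_fun V (ffun V E)"
  unfolding ffun_def[abs_def] delta_eq_meets[OF assms]
proof
  show "monotone_set_fun V (\<lambda>A. \<Sum>v\<in>V. of_bool (A \<inter> {u. E v u} \<noteq> {}) :: nat)"
    by (rule monotone_set_fun_sum, rule monotone_set_fun_meets)
  show "submodular_set_fun V (\<lambda>A. \<Sum>v\<in>V. of_bool (A \<inter> {u. E v u} \<noteq> {}) :: nat)"
    by (rule submodular_set_fun_sum, rule submodular_set_fun_meets)
qed

lemma Lmax_nonneg:
  assumes "wgraph V E w" "V \<noteq> {}"
  shows "0 \<le> Lmax V E w"
proof -
  obtain v where "v \<in> V" using assms(2) by blast
  moreover have "finite V" using assms(1) by (simp add: wgraph_def)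
  ultimately have "lv V E w v \<le> Lmax V E w"
    unfolding Lmax_def by (intro Max_ge) auto
  moreover have "0 \<le> lv V E w v"
    unfolding lv_def by (rule Lcm_int_greater_eq_0)
  ultimately show ?thesis by simp
qed

theorem mainTheorem15:
  fixes V :: "'a set" and E :: "'a \<Rightarrow> 'a \<Rightarrow> bool" and w :: "'a \<Rightarrow> 'a \<Rightarrow> rat"
  assumes "wgraph V E w" and "no_isolated V E"
  shows "(\<forall>A B. A \<subseteq> B \<and> B \<subseteq> V \<longrightarrow> gfun V E w A \<le> gfun V E w B)
       \<and> (\<forall>A B. A \<subseteq> V \<and> B \<subseteq> V \<longrightarrow>
            gfun V E w (A \<union> B) + gfun V E w (A \<inter> B) \<le> gfun V E w A + gfun V E w B)"
proof (cases "V = {}")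
  case True
  \<comment> \<open>here \<open>Lmax\<close> is \<open>Max {}\<close>, of unknown sign, but g vanishes identically\<close>
  then show ?thesis by (simp add: gfun_def hfun_def ffun_def)
next
  case False
  define scale :: "nat \<Rightarrow> real" where "scale n = real n / real_of_int (Lmax V E w)" for n
  have scale: "mono scale" "\<And>m n. scale (m + n) = scale m + scale n"
    using Lmax_nonneg[OF assms(1) False]
    by (auto simp: scale_def mono_def divide_right_mono add_divide_distrib)
  have rat: "mono real_of_rat" "\<And>x y. real_of_rat (x + y) = real_of_rat x + real_of_rat y"
    by (auto simp: mono_def of_rat_add of_rat_less_eq)
  have g: "gfun V E w = (\<lambda>A. real_of_rat (hfun V E w A) + scale (ffun V E A))"
    by (simp add: gfun_def[abs_def] scale_def)
  obtain h_mono: "monotone_set_fun V (hfun V E w)" and h_sub: "submodular_set_fun V (hfun V E w)"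
    using monotone_submodular_hfun[OF assms(1)] by blast
  obtain f_mono: "monotone_set_fun V (ffun V E)" and f_sub: "submodular_set_fun V (ffun V E)"
    using monotone_submodular_ffun[OF assms(1)] by blast
  have "monotone_set_fun V (gfun V E w)"
    unfolding g by (rule monotone_set_fun_add[OF monotone_set_fun_comp[of real_of_rat, OF rat(1) h_mono]
          monotone_set_fun_comp[of scale, OF scale(1) f_mono]])
  moreover have "submodular_set_fun V (gfun V E w)"
    unfolding g by (rule submodular_set_fun_add[OF submodular_set_fun_comp[of real_of_rat, OF rat h_sub]
          submodular_set_fun_comp[of scale, OF scale f_sub]])
  ultimately show ?thesis
    unfolding monotone_set_fun_def submodular_set_fun_def by (rule conjI)
qed

end
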